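(* Let $A$ be a totally unimodular $n\times m$ matrix, let $L(A) := \{v\in\mathbb{Z}^m : Av = 0\}$ and $\lambda := \lambda(L(A))$. Then every nonzero vector $v \in L(A)$ with $\lVert v\rVert_1 < 2\lambda$ is a circuit of $A$.
   Context: A matrix is totally unimodular if every square submatrix has determinant $0$ or $\pm1$. $\lambda(L) := \min\{\lVert v\rVert_1 : 0 \ne v\in L\}$ with $\lVert\cdot\rVert_1$ the $\ell_1$-norm. A vector $u\in L(A)$ is a circuit of $A$ if there is no nonzero $v\in L(A)$ with $\mathrm{supp}(v) \subsetneq \mathrm{supp}(u)$, and $\gcd(u_1,\dots,u_m) = 1$. *)

theory Defs
  imports "Jordan_Normal_Form.Determinant" "Jordan_Normal_Form.DL_Submatrix"
begin

definition totally_unimodular :: "int mat \<Rightarrow> bool" where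
  "totally_unimodular A \<longleftrightarrow>
     (\<forall>I J. I \<subseteq> {..<dim_row A} \<longrightarrow> J \<subseteq> {..<dim_col A} \<longrightarrow> card I = card J \<longrightarrow>
        det (submatrix A I J) \<in> {-1, 0, 1})"

definition int_kernel :: "int mat \<Rightarrow> int vec set" where
  "int_kernel A = {v \<in> carrier_vec (dim_col A). A *\<^sub>v v = 0\<^sub>v (dim_row A)}"

definition l1norm :: "int vec \<Rightarrow> nat" where
  "l1norm v = (\<Sum>i<dim_vec v. nat \<bar>v $ i\<bar>)"

definition lattice_lambda :: "int vec set \<Rightarrow> nat" where
  "lattice_lambda L = (LEAST k. \<exists>v\<in>L. v \<noteq> 0\<^sub>v (dim_vec v) \<and> l1norm v = k)"

definition supp :: "int vec \<Rightarrow> nat set" where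
  "supp v = {i. i < dim_vec v \<and> v $ i \<noteq> 0}"

definition is_circuit :: "int mat \<Rightarrow> int vec \<Rightarrow> bool" where
  "is_circuit A u \<longleftrightarrow> u \<in> int_kernel A
     \<and> \<not> (\<exists>v\<in>int_kernel A. v \<noteq> 0\<^sub>v (dim_vec v) \<and> supp v \<subset> supp u)
     \<and> Gcd {u $ i | i. i < dim_vec u} = 1"

end

theory Submission
  imports Defs
begin

text \<open>A lattice vector v that is not a circuit splits as v = z + (v - z) with z and v - z nonzero
vectors of L(A) conformal to v (same signs as v and coordinatewise dominated by it), so that
l1norm v = l1norm z + l1norm (v - z) \<ge> 2 \<lambda>. If the entries of v have a common divisor g \<ge> 2, take z = v / g.
If a nonzero w in L(A) has strictly smaller support, a rational combination y of v and w lies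
coordinatewise between 0 and v, vanishes at one coordinate of the support of v and equals v at
another; total unimodularity allows y to be rounded to an integral kernel vector z with
floor y \<le> z \<le> ceiling y, and this z works. The rounding repeatedly moves y along a kernel direction
supported on its fractional coordinates until one more coordinate becomes integral; such a
direction exists, since otherwise Cramer's rule on a maximal nonsingular submatrix (of
determinant \<plusminus>1) would force those coordinates to be integral.\<close>

definition index_in :: "nat set \<Rightarrow> nat \<Rightarrow> nat" where
  "index_in J j = card {a\<in>J. a < j}"

lemma index_in_less_card: "finite J \<Longrightarrow> j \<in> J \<Longrightarrow> index_in J j < card J"
  unfolding index_in_def by (intro psubset_card_mono) auto

lemma index_in_pick: "k < card J \<Longrightarrow> index_in J (pick J k) = k"
  unfolding index_in_def using card_pick by blast

lemma pick_index_in: "j \<in> J \<Longrightarrow> pick J (index_in J j) = j"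
  unfolding index_in_def by (rule pick_card_in_set)

lemma sum_pick: "finite J \<Longrightarrow> (\<Sum>k<card J. f (pick J k)) = (\<Sum>j\<in>J. f j)"
  by (rule sum.reindex_bij_witness[where i = "index_in J" and j = "pick J"])
    (auto simp: index_in_pick pick_index_in index_in_less_card pick_in_set)

lemma card_Collect_less_mem: "J \<subseteq> {..<N} \<Longrightarrow> card {j. j < N \<and> j \<in> J} = card J"
  by (metis (no_types, lifting) Collect_cong lessThan_iff subset_iff Collect_mem_eq)

lemma submatrix_carrier:
  "B \<in> carrier_mat n m \<Longrightarrow> I \<subseteq> {..<n} \<Longrightarrow> J \<subseteq> {..<m} \<Longrightarrow>
    submatrix B I J \<in> carrier_mat (card I) (card J)"
  by (auto simp: dim_submatrix card_Collect_less_mem intro!: carrier_matI)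

lemma submatrix_index_pick:
  "B \<in> carrier_mat n m \<Longrightarrow> I \<subseteq> {..<n} \<Longrightarrow> J \<subseteq> {..<m} \<Longrightarrow> i < card I \<Longrightarrow> j < card J \<Longrightarrow>
    submatrix B I J $$ (i, j) = B $$ (pick I i, pick J j)"
  by (auto simp: submatrix_index card_Collect_less_mem)

definition supported_on :: "nat set \<Rightarrow> 'a::zero vec \<Rightarrow> bool" where
  "supported_on S x \<longleftrightarrow> (\<forall>j<dim_vec x. j \<notin> S \<longrightarrow> x $ j = 0)"

definition vec_restrict :: "nat set \<Rightarrow> 'a vec \<Rightarrow> 'a vec" where
  "vec_restrict J x = vec (card J) (\<lambda>k. x $ pick J k)"

definition vec_extend :: "nat \<Rightarrow> nat set \<Rightarrow> 'a::zero vec \<Rightarrow> 'a vec" where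
  "vec_extend m J x = vec m (\<lambda>j. if j \<in> J then x $ index_in J j else 0)"

lemma supported_on_vec_extend: "supported_on J (vec_extend m J x)"
  by (simp add: supported_on_def vec_extend_def)

lemma pick_in_subset: "J \<subseteq> {..<m} \<Longrightarrow> k < card J \<Longrightarrow> pick J k \<in> J"
  using finite_subset pick_in_set by blast

lemma pick_less: "J \<subseteq> {..<m} \<Longrightarrow> k < card J \<Longrightarrow> pick J k < m"
  using pick_in_subset by blast

lemma vec_restrict_zero: "J \<subseteq> {..<m} \<Longrightarrow> vec_restrict J (0\<^sub>v m) = 0\<^sub>v (card J)"
  by (intro eq_vecI) (auto simp: vec_restrict_def pick_less)

lemma vec_restrict_extend:
  assumes "J \<subseteq> {..<m}" and "x \<in> carrier_vec (card J)"
  shows "vec_restrict J (vec_extend m J x) = x"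
proof (rule eq_vecI)
  fix k assume "k < dim_vec x"
  then have "k < card J" using assms(2) by simp
  moreover have "pick J k < m" using pick_less[OF assms(1) \<open>k < card J\<close>] .
  ultimately show "vec_restrict J (vec_extend m J x) $ k = x $ k"
    using pick_in_subset[OF assms(1)] by (simp add: vec_restrict_def vec_extend_def index_in_pick)
qed (use assms(2) in \<open>simp add: vec_restrict_def\<close>)

lemma vec_extend_restrict_index:
  assumes "J \<subseteq> {..<m}" and "j < m"
  shows "vec_extend m J (vec_restrict J x) $ j = (if j \<in> J then x $ j else 0)"
  using assms index_in_less_card[OF finite_subset[OF assms(1) finite_lessThan]]
  by (simp add: vec_restrict_def vec_extend_def pick_index_in)

lemma vec_extend_restrict:
  assumes "J \<subseteq> {..<m}" and "x \<in> carrier_vec m" and "supported_on J x"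
  shows "vec_extend m J (vec_restrict J x) = x"
proof (rule eq_vecI)
  fix j assume j: "j < dim_vec x"
  then have "j < m" using assms(2) by simp
  then show "vec_extend m J (vec_restrict J x) $ j = x $ j"
    using j assms(3) vec_extend_restrict_index[OF assms(1) \<open>j < m\<close>, of x]
    by (simp add: supported_on_def)
qed (use assms(2) in \<open>simp add: vec_extend_def\<close>)

lemma mult_mat_vec_supported:
  fixes B :: "'a::comm_ring_1 mat"
  assumes "B \<in> carrier_mat n m" "x \<in> carrier_vec m" "supported_on S x" "S \<subseteq> {..<m}" "i < n"
  shows "(B *\<^sub>v x) $ i = (\<Sum>j\<in>S. B $$ (i, j) * x $ j)"
proof -
  have "(B *\<^sub>v x) $ i = (\<Sum>j<m. B $$ (i, j) * x $ j)"
    using assms by (auto simp: scalar_prod_def intro!: sum.cong)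
  also have "\<dots> = (\<Sum>j\<in>S. B $$ (i, j) * x $ j)"
    using assms(2-4) by (intro sum.mono_neutral_right) (auto simp: supported_on_def)
  finally show ?thesis .
qed

lemma submatrix_mult_vec_restrict:
  fixes B :: "'a::comm_ring_1 mat"
  assumes B: "B \<in> carrier_mat n m" and I: "I \<subseteq> {..<n}" and J: "J \<subseteq> {..<m}"
    and x: "x \<in> carrier_vec m" "supported_on J x" and i: "i \<in> I"
  shows "(submatrix B I J *\<^sub>v vec_restrict J x) $ index_in I i = (B *\<^sub>v x) $ i"
proof -
  have fin: "finite I" "finite J" using I J finite_subset by blast+
  have k: "index_in I i < card I" using index_in_less_card[OF fin(1) i] .
  have "(submatrix B I J *\<^sub>v vec_restrict J x) $ index_in I i
      = (\<Sum>l<card J. B $$ (i, pick J l) * x $ pick J l)"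
    using submatrix_carrier[OF B I J] submatrix_index_pick[OF B I J] k i
    by (auto simp: scalar_prod_def vec_restrict_def pick_index_in intro!: sum.cong)
  also have "\<dots> = (\<Sum>j\<in>J. B $$ (i, j) * x $ j)"
    using sum_pick[OF fin(2)] .
  also have "\<dots> = (B *\<^sub>v x) $ i"
    using mult_mat_vec_supported[OF B x J] i I by auto
  finally show ?thesis .
qed

lemma mult_mat_vec_extend:
  fixes B :: "'a::comm_ring_1 mat"
  assumes B: "B \<in> carrier_mat n m" and I: "I \<subseteq> {..<n}" and J: "J \<subseteq> {..<m}"
    and x: "x \<in> carrier_vec (card J)" and i: "i \<in> I"
  shows "(B *\<^sub>v vec_extend m J x) $ i = (submatrix B I J *\<^sub>v x) $ index_in I i"
proof -
  have "vec_extend m J x \<in> carrier_vec m" by (simp add: vec_extend_def)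
  then show ?thesis
    using submatrix_mult_vec_restrict[OF B I J _ supported_on_vec_extend[of J m x] i] vec_restrict_extend[OF J x]
    by simp
qed

lemma nonsingular_submatrix_kernel:
  fixes B :: "'a::field mat"
  assumes B: "B \<in> carrier_mat n m" and I: "I \<subseteq> {..<n}" and J: "J \<subseteq> {..<m}"
    and card: "card I = card J" and det: "det (submatrix B I J) \<noteq> 0"
    and x: "x \<in> carrier_vec m" "supported_on J x" and Bx: "\<forall>i\<in>I. (B *\<^sub>v x) $ i = 0"
  shows "x = 0\<^sub>v m"
proof -
  let ?M = "submatrix B I J"
  have M: "?M \<in> carrier_mat (card J) (card J)"
    using submatrix_carrier[OF B I J] card by simp
  have "?M *\<^sub>v vec_restrict J x = 0\<^sub>v (card J)"
  proof (rule eq_vecI)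
    fix k assume "k < dim_vec (0\<^sub>v (card J) :: 'a vec)"
    then have k: "k < card I" using card by simp
    then have "pick I k \<in> I" using I finite_subset pick_in_set by blast
    then show "(?M *\<^sub>v vec_restrict J x) $ k = 0\<^sub>v (card J) $ k"
      using submatrix_mult_vec_restrict[OF B I J x] Bx k card index_in_pick[OF k] by fastforce
  qed (use M in auto)
  moreover have "vec_restrict J x \<in> carrier_vec (card J)"
    by (simp add: vec_restrict_def)
  ultimately have "vec_restrict J x = 0\<^sub>v (card J)"
    using det_0_iff_vec_prod_zero_field[OF M] det by blast
  then have "x = vec_extend m J (0\<^sub>v (card J))"
    using vec_extend_restrict[OF J x] by simp
  also have "\<dots> = 0\<^sub>v m"
    using index_in_less_card[OF finite_subset[OF J finite_lessThan]]
    by (intro eq_vecI) (auto simp: vec_extend_def)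
  finally show ?thesis .
qed

lemma singular_submatrix_kernel:
  fixes B :: "'a::field mat"
  assumes B: "B \<in> carrier_mat n m" and I: "I \<subseteq> {..<n}" and J: "J \<subseteq> {..<m}"
    and card: "card I = card J" and det: "det (submatrix B I J) = 0"
  shows "\<exists>x\<in>carrier_vec m. supported_on J x \<and> x \<noteq> 0\<^sub>v m \<and> (\<forall>i\<in>I. (B *\<^sub>v x) $ i = 0)"
proof -
  let ?M = "submatrix B I J"
  have M: "?M \<in> carrier_mat (card J) (card J)"
    using submatrix_carrier[OF B I J] card by simp
  obtain y where y: "y \<in> carrier_vec (card J)" "y \<noteq> 0\<^sub>v (card J)" "?M *\<^sub>v y = 0\<^sub>v (card J)"
    using det_0_iff_vec_prod_zero_field[OF M] det by blast
  define x where "x = vec_extend m J y"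
  have x: "x \<in> carrier_vec m" "supported_on J x"
    unfolding x_def by (simp add: vec_extend_def, rule supported_on_vec_extend)
  have restrict: "vec_restrict J x = y"
    unfolding x_def using vec_restrict_extend[OF J y(1)] .
  have "(B *\<^sub>v x) $ i = 0" if "i \<in> I" for i
  proof -
    have "index_in I i < card J"
      using index_in_less_card[OF finite_subset[OF I] that] card by simp
    then show ?thesis
      using submatrix_mult_vec_restrict[OF B I J x that] y(3) restrict by simp
  qed
  moreover have "x \<noteq> 0\<^sub>v m"
    using restrict y(2) vec_restrict_zero[OF J] by auto
  ultimately show ?thesis using x by blast
qed

lemma nonsingular_mult_vec_solvable:
  fixes M :: "'a::field mat"
  assumes M: "M \<in> carrier_mat r r" and "det M \<noteq> 0" and b: "b \<in> carrier_vec r"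
  shows "\<exists>x\<in>carrier_vec r. M *\<^sub>v x = b"
proof -
  have "M \<in> Units (ring_mat TYPE('a) r ())"
    by (rule det_non_zero_imp_unit[OF M assms(2)])
  then obtain N where N: "N \<in> carrier_mat r r" "M * N = 1\<^sub>m r"
    unfolding Units_def ring_mat_def by force
  have "M *\<^sub>v (N *\<^sub>v b) = b"
    using M N b by (metis assoc_mult_mat_vec one_mult_mat_vec)
  then show ?thesis using N b by (intro bexI[of _ "N *\<^sub>v b"]) auto
qed

lemma maximal_nonsingular_submatrix:
  fixes B :: "'a::comm_ring_1 mat"
  assumes F: "F \<subseteq> {..<m}"
  shows "\<exists>I J. I \<subseteq> {..<n} \<and> J \<subseteq> F \<and> card I = card J \<and> det (submatrix B I J) \<noteq> 0 \<and>
    (\<forall>i<n. i \<notin> I \<longrightarrow> (\<forall>c\<in>F - J. det (submatrix B (insert i I) (insert c J)) = 0))"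
proof -
  have finF: "finite F" using finite_subset[OF F finite_lessThan] .
  define P where "P r \<longleftrightarrow> (\<exists>I J. I \<subseteq> {..<n} \<and> J \<subseteq> F \<and> card I = r \<and> card J = r \<and>
    det (submatrix B I J) \<noteq> 0)" for r
  have "P 0"
  proof -
    have "det (submatrix B {} {}) = 1"
      by (rule det_dim_zero) (simp add: submatrix_def)
    then show ?thesis unfolding P_def by (intro exI[of _ "{}"]) simp
  qed
  moreover have "\<forall>r. P r \<longrightarrow> r \<le> card F"
  proof (intro allI impI)
    fix r assume "P r"
    then obtain J where "J \<subseteq> F" "card J = r" unfolding P_def by blast
    then show "r \<le> card F" using card_mono[OF finF] by blast
  qed
  ultimately obtain r where "P r" and r_max: "\<And>s. P s \<Longrightarrow> s \<le> r"
    using Nat.ex_has_greatest_nat[of P 0 "card F"] by blast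
  then obtain I J where IJ: "I \<subseteq> {..<n}" "J \<subseteq> F" "card I = r" "card J = r"
    and det: "det (submatrix B I J) \<noteq> 0"
    unfolding P_def by blast
  have fin: "finite I" "finite J"
    using finite_subset[OF IJ(1) finite_lessThan] finite_subset[OF IJ(2) finF] by auto
  have "det (submatrix B (insert i I) (insert c J)) = 0" if "i < n" "i \<notin> I" "c \<in> F - J" for i c
  proof (rule ccontr)
    assume "det (submatrix B (insert i I) (insert c J)) \<noteq> 0"
    moreover have "insert i I \<subseteq> {..<n}" "insert c J \<subseteq> F"
      "card (insert i I) = Suc r" "card (insert c J) = Suc r"
      using that IJ fin by auto
    ultimately have "P (Suc r)"
      unfolding P_def by blast
    then show False using r_max[of "Suc r"] by simp
  qed
  then show ?thesis
    using IJ det by (intro exI[of _ I] exI[of _ J]) auto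
qed

lemma nonsingular_submatrix_kernel_proportional:
  fixes B :: "'a::field mat"
  assumes B: "B \<in> carrier_mat n m" and I: "I \<subseteq> {..<n}" and J: "J \<subseteq> {..<m}"
    and card: "card I = card J" and det: "det (submatrix B I J) \<noteq> 0"
    and e: "e \<in> carrier_vec m" "supported_on (insert c J) e" "\<forall>l\<in>I. (B *\<^sub>v e) $ l = 0"
    and d: "d \<in> carrier_vec m" "supported_on (insert c J) d" "\<forall>l\<in>I. (B *\<^sub>v d) $ l = 0"
    and dc: "d $ c = 1"
  shows "e = e $ c \<cdot>\<^sub>v d"
proof -
  define g where "g = e - e $ c \<cdot>\<^sub>v d"
  have gm: "g \<in> carrier_vec m"
    using e(1) d(1) by (simp add: g_def)
  have "g $ j = 0" if "j < m" "j \<notin> J" for j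
    using that e(1,2) d(1,2) dc by (cases "j = c") (auto simp: g_def supported_on_def)
  then have g: "g \<in> carrier_vec m" "supported_on J g"
    using gm by (auto simp: supported_on_def)
  have Bg: "B *\<^sub>v g = B *\<^sub>v e - e $ c \<cdot>\<^sub>v (B *\<^sub>v d)"
    using B e(1) d(1) by (simp add: g_def mult_minus_distrib_mat_vec mult_mat_vec)
  have "(B *\<^sub>v g) $ l = 0" if "l \<in> I" for l
  proof -
    have "l < n" "(B *\<^sub>v e) $ l = 0" "(B *\<^sub>v d) $ l = 0"
      using that I e(3) d(3) by auto
    then show ?thesis using B unfolding Bg by simp
  qed
  then have "g = 0\<^sub>v m"
    using nonsingular_submatrix_kernel[OF B I J card det g] by blast
  have "e $ j = e $ c * d $ j" if "j < m" for j
  proof -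
    have "g $ j = 0" using \<open>g = 0\<^sub>v m\<close> that by simp
    then show ?thesis using that e(1) d(1) by (simp add: g_def)
  qed
  then show ?thesis
    using e(1) d(1) by (intro eq_vecI) auto
qed

lemma row_vanishes_of_singular_extension:
  fixes B :: "'a::field mat"
  assumes B: "B \<in> carrier_mat n m" and I: "I \<subseteq> {..<n}" and J: "J \<subseteq> {..<m}"
    and card: "card I = card J" and det: "det (submatrix B I J) \<noteq> 0"
    and c: "c < m" "c \<notin> J" and i: "i < n" "i \<notin> I"
    and det_ext: "det (submatrix B (insert i I) (insert c J)) = 0"
    and d: "d \<in> carrier_vec m" "supported_on (insert c J) d" "\<forall>l\<in>I. (B *\<^sub>v d) $ l = 0"
    and dc: "d $ c = 1"
  shows "(B *\<^sub>v d) $ i = 0"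
proof -
  have "finite I" "finite J"
    using finite_subset[OF I finite_lessThan] finite_subset[OF J finite_lessThan] by auto
  then have IJ': "insert i I \<subseteq> {..<n}" "insert c J \<subseteq> {..<m}" "card (insert i I) = card (insert c J)"
    using I J c i card by auto
  obtain e where e: "e \<in> carrier_vec m" "supported_on (insert c J) e" "e \<noteq> 0\<^sub>v m"
    and Be: "\<forall>l\<in>insert i I. (B *\<^sub>v e) $ l = 0"
    using singular_submatrix_kernel[OF B IJ' det_ext] by blast
  have Be_I: "\<forall>l\<in>I. (B *\<^sub>v e) $ l = 0" using Be by simp
  have "e = e $ c \<cdot>\<^sub>v d"
    using nonsingular_submatrix_kernel_proportional[OF B I J card det e(1,2) Be_I d dc] .
  then have "B *\<^sub>v e = e $ c \<cdot>\<^sub>v (B *\<^sub>v d)"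
    using mult_mat_vec[OF B d(1)] by metis
  then have "(B *\<^sub>v e) $ i = e $ c * (B *\<^sub>v d) $ i"
    using B i by simp
  moreover have "e $ c \<noteq> 0"
  proof
    assume "e $ c = 0"
    then have "supported_on J e" using e(2) by (auto simp: supported_on_def)
    then show False
      using nonsingular_submatrix_kernel[OF B I J card det e(1) _ Be_I] e(3) by simp
  qed
  ultimately show ?thesis
    using Be by simp
qed

lemma nonsingular_submatrix_column_completion:
  fixes B :: "'a::field mat"
  assumes B: "B \<in> carrier_mat n m" and I: "I \<subseteq> {..<n}" and J: "J \<subseteq> {..<m}"
    and card: "card I = card J" and det: "det (submatrix B I J) \<noteq> 0" and c: "c < m" "c \<notin> J"
  shows "\<exists>d\<in>carrier_vec m. supported_on (insert c J) d \<and> d $ c = 1 \<and> (\<forall>i\<in>I. (B *\<^sub>v d) $ i = 0)"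
proof -
  let ?M = "submatrix B I J"
  have M: "?M \<in> carrier_mat (card J) (card J)"
    using submatrix_carrier[OF B I J] card by simp
  have "- vec_restrict I (col B c) \<in> carrier_vec (card J)"
    using card by (simp add: vec_restrict_def)
  then obtain x where x: "x \<in> carrier_vec (card J)" "?M *\<^sub>v x = - vec_restrict I (col B c)"
    using nonsingular_mult_vec_solvable[OF M det] by blast
  define d where "d = vec_extend m J x + unit_vec m c"
  have ext: "vec_extend m J x \<in> carrier_vec m"
    by (simp add: vec_extend_def)
  have d: "d \<in> carrier_vec m" "supported_on (insert c J) d" "d $ c = 1"
    using c by (auto simp: d_def vec_extend_def supported_on_def)
  have Bd: "B *\<^sub>v d = B *\<^sub>v vec_extend m J x + B *\<^sub>v unit_vec m c"
    using B ext by (simp add: d_def mult_add_distrib_mat_vec)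
  have "(B *\<^sub>v d) $ i = 0" if "i \<in> I" for i
  proof -
    have i: "i < n" "index_in I i < card I"
      using that I index_in_less_card[OF finite_subset[OF I finite_lessThan]] by auto
    have "(B *\<^sub>v vec_extend m J x) $ i = (?M *\<^sub>v x) $ index_in I i"
      by (rule mult_mat_vec_extend[OF B I J x(1) that])
    also have "\<dots> = - B $$ (i, c)"
      using x(2) i B c pick_index_in[OF that] by (simp add: vec_restrict_def)
    finally show ?thesis
      using B c i unfolding Bd by simp
  qed
  then show ?thesis using d by blast
qed

lemma column_dependence_from_maximal_minor:
  fixes B :: "'a::field mat"
  assumes B: "B \<in> carrier_mat n m" and I: "I \<subseteq> {..<n}" and J: "J \<subseteq> {..<m}"
    and card: "card I = card J" and det: "det (submatrix B I J) \<noteq> 0"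
    and c: "c < m" "c \<notin> J"
    and maximal: "\<forall>i<n. i \<notin> I \<longrightarrow> det (submatrix B (insert i I) (insert c J)) = 0"
  shows "\<exists>d\<in>carrier_vec m. supported_on (insert c J) d \<and> d $ c = 1 \<and> B *\<^sub>v d = 0\<^sub>v n"
proof -
  obtain d where d: "d \<in> carrier_vec m" "supported_on (insert c J) d" and dc: "d $ c = 1"
    and rows_I: "\<forall>i\<in>I. (B *\<^sub>v d) $ i = 0"
    using nonsingular_submatrix_column_completion[OF B I J card det c] by blast
  have "(B *\<^sub>v d) $ i = 0" if "i < n" for i
  proof (cases "i \<in> I")
    case False
    then have "det (submatrix B (insert i I) (insert c J)) = 0"
      using maximal that by blast
    then show ?thesis
      by (rule row_vanishes_of_singular_extension[OF B I J card det c that False _ d rows_I dc])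
  qed (use rows_I in blast)
  then have "B *\<^sub>v d = 0\<^sub>v n"
    using B by (intro eq_vecI) auto
  then show ?thesis using d dc by blast
qed

lemma det_Ints:
  fixes M :: "'a::comm_ring_1 mat"
  assumes M: "M \<in> carrier_mat r r" and ints: "\<And>i j. i < r \<Longrightarrow> j < r \<Longrightarrow> M $$ (i, j) \<in> \<int>"
  shows "det M \<in> \<int>"
  unfolding det_def'[OF M]
proof (intro Ints_sum Ints_mult Ints_prod)
  fix p assume "p \<in> {p. p permutes {0..<r}}"
  then show "M $$ (i, p i) \<in> \<int>" if "i \<in> {0..<r}" for i
    using that ints permutes_in_image by fastforce
qed simp

lemma cramer_Ints:
  fixes M :: "'a::comm_ring_1 mat"
  assumes M: "M \<in> carrier_mat r r" and det: "det M \<in> {-1, 1}"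
    and ints: "\<And>i j. i < r \<Longrightarrow> j < r \<Longrightarrow> M $$ (i, j) \<in> \<int>"
    and x: "x \<in> carrier_vec r" and Mx: "\<And>i. i < r \<Longrightarrow> (M *\<^sub>v x) $ i \<in> \<int>"
    and k: "k < r"
  shows "x $ k \<in> \<int>"
proof -
  have "det (replace_col M (M *\<^sub>v x) k) \<in> \<int>"
    using M ints Mx by (intro det_Ints[of _ r]) (auto simp: replace_col_def)
  then have "x $ k * det M \<in> \<int>"
    unfolding cramer_lemma_mat[OF M x k] .
  then have "x $ k * det M * det M \<in> \<int>"
    using det by (intro Ints_mult) auto
  moreover have "det M * det M = 1"
    using det by auto
  ultimately show ?thesis by (simp add: mult.assoc)
qed

lemma mult_mat_vec_Ints:
  fixes B :: "'a::comm_ring_1 mat"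
  assumes "B \<in> carrier_mat n m" "x \<in> carrier_vec m" "i < n"
    and "\<And>j. j < m \<Longrightarrow> B $$ (i, j) \<in> \<int>" "\<And>j. j < m \<Longrightarrow> x $ j \<in> \<int>"
  shows "(B *\<^sub>v x) $ i \<in> \<int>"
  using assms by (auto simp: scalar_prod_def intro!: Ints_sum Ints_mult)

lemma supported_on_mono: "S \<subseteq> T \<Longrightarrow> supported_on S x \<Longrightarrow> supported_on T x"
  unfolding supported_on_def by blast

lemma submatrix_map_mat: "submatrix (map_mat f A) I J = map_mat f (submatrix A I J)"
  by (intro eq_matI) (auto simp: submatrix_def pick_le)

lemma totally_unimodular_submatrix_det:
  assumes "A \<in> carrier_mat n m" "totally_unimodular A"
    and "I \<subseteq> {..<n}" "J \<subseteq> {..<m}" "card I = card J"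
  shows "det (submatrix (map_mat of_int A) I J) \<in> {-1, 0, 1 :: 'a::comm_ring_1}"
proof -
  have "det (submatrix A I J) \<in> {-1, 0, 1}"
    using assms unfolding totally_unimodular_def by auto
  then show ?thesis
    unfolding submatrix_map_mat of_int_hom.hom_det by auto
qed

lemma kernel_restriction_Ints:
  fixes A :: "int mat" and y :: "'a::comm_ring_1 vec"
  assumes A: "A \<in> carrier_mat n m" and F: "F \<subseteq> {..<m}"
    and y: "y \<in> carrier_vec m" and Ay: "map_mat of_int A *\<^sub>v y = 0\<^sub>v n"
    and outside: "\<And>j. j < m \<Longrightarrow> j \<notin> F \<Longrightarrow> y $ j \<in> \<int>" and i: "i < n"
  shows "(map_mat of_int A *\<^sub>v vec_extend m F (vec_restrict F y)) $ i \<in> \<int>"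
proof -
  let ?B = "map_mat of_int A" and ?yF = "vec_extend m F (vec_restrict F y)"
  have yF: "?yF \<in> carrier_vec m" by (simp add: vec_extend_def)
  have "(y - ?yF) $ j \<in> \<int>" if "j < m" for j
    using that y yF outside[OF that] vec_extend_restrict_index[OF F that, of y] by auto
  then have "(?B *\<^sub>v (y - ?yF)) $ i \<in> \<int>"
    using A y yF i by (intro mult_mat_vec_Ints[of _ n m]) auto
  moreover have "?B *\<^sub>v ?yF = - (?B *\<^sub>v (y - ?yF))"
    using A y yF Ay by (simp add: mult_minus_distrib_mat_vec)
  ultimately show ?thesis
    using A i by simp
qed

lemma totally_unimodular_kernel_Ints:
  fixes A :: "int mat" and y :: "'a::comm_ring_1 vec"
  defines "B \<equiv> map_mat of_int A"
  assumes A: "A \<in> carrier_mat n m" and TU: "totally_unimodular A"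
    and I: "I \<subseteq> {..<n}" and F: "F \<subseteq> {..<m}" and card: "card I = card F"
    and det: "det (submatrix B I F) \<noteq> 0"
    and y: "y \<in> carrier_vec m" and By: "B *\<^sub>v y = 0\<^sub>v n"
    and outside: "\<And>j. j < m \<Longrightarrow> j \<notin> F \<Longrightarrow> y $ j \<in> \<int>"
    and j: "j \<in> F"
  shows "y $ j \<in> \<int>"
proof -
  let ?M = "submatrix B I F" and ?yF = "vec_extend m F (vec_restrict F y)"
  have B: "B \<in> carrier_mat n m" using A by (simp add: B_def)
  have M: "?M \<in> carrier_mat (card F) (card F)"
    using submatrix_carrier[OF B I F] card by simp
  have yF: "?yF \<in> carrier_vec m" by (simp add: vec_extend_def)
  have restrict: "vec_restrict F y \<in> carrier_vec (card F)"
    by (simp add: vec_restrict_def)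
  have M_y: "(?M *\<^sub>v vec_restrict F y) $ k \<in> \<int>" if "k < card F" for k
  proof -
    have "pick I k \<in> I" using pick_in_subset[OF I] that card by simp
    moreover have "index_in I (pick I k) = k"
      using index_in_pick[of k I] that card by simp
    ultimately have "(?M *\<^sub>v vec_restrict F y) $ k = (B *\<^sub>v ?yF) $ pick I k"
      using submatrix_mult_vec_restrict[OF B I F yF supported_on_vec_extend, of "pick I k"]
        vec_restrict_extend[OF F restrict] by simp
    then show ?thesis
      using kernel_restriction_Ints[OF A F y By[unfolded B_def] outside] \<open>pick I k \<in> I\<close> I
      by (auto simp: B_def)
  qed
  have det_M: "det ?M \<in> {-1, 1}"
    using totally_unimodular_submatrix_det[OF A TU I F card] det by (auto simp: B_def)
  have M_Ints: "?M $$ (i, l) \<in> \<int>" if "i < card F" "l < card F" for i l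
    using submatrix_index_pick[OF B I F] that card pick_less[OF I] pick_less[OF F] A
    by (simp add: B_def)
  have j_index: "index_in F j < card F"
    using index_in_less_card[OF finite_subset[OF F finite_lessThan] j] .
  from cramer_Ints[OF M det_M M_Ints restrict M_y j_index]
  show ?thesis
    using pick_index_in[OF j] j_index by (simp add: vec_restrict_def)
qed

lemma totally_unimodular_fractional_kernel_direction:
  fixes A :: "int mat" and y :: "'a::field_char_0 vec"
  defines "B \<equiv> map_mat of_int A"
  assumes A: "A \<in> carrier_mat n m" and TU: "totally_unimodular A"
    and y: "y \<in> carrier_vec m" and By: "B *\<^sub>v y = 0\<^sub>v n"
    and j0: "j0 < m" "y $ j0 \<notin> \<int>"
  shows "\<exists>d\<in>carrier_vec m. B *\<^sub>v d = 0\<^sub>v n \<and> supported_on {j. j < m \<and> y $ j \<notin> \<int>} d \<and> d \<noteq> 0\<^sub>v m"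
proof -
  define F where "F = {j. j < m \<and> y $ j \<notin> \<int>}"
  have B: "B \<in> carrier_mat n m" using A by (simp add: B_def)
  have F: "F \<subseteq> {..<m}" by (auto simp: F_def)
  obtain I J where I: "I \<subseteq> {..<n}" and JF: "J \<subseteq> F" and card: "card I = card J"
    and det: "det (submatrix B I J) \<noteq> 0"
    and maximal: "\<forall>i<n. i \<notin> I \<longrightarrow> (\<forall>c\<in>F - J. det (submatrix B (insert i I) (insert c J)) = 0)"
    using maximal_nonsingular_submatrix[OF F, of n B] by blast
  have J: "J \<subseteq> {..<m}" using JF F by blast
  show ?thesis
  proof (cases "J = F")
    case True
    then have "y $ j0 \<in> \<int>"
      using totally_unimodular_kernel_Ints[OF A TU I F] card det y By j0
      by (auto simp: B_def F_def)
    then show ?thesis using j0 by blast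
  next
    case False
    then obtain c where c: "c \<in> F" "c \<notin> J" using JF by blast
    then have "c < m" using F by blast
    then obtain d where d: "d \<in> carrier_vec m" "supported_on (insert c J) d" "d $ c = 1"
      "B *\<^sub>v d = 0\<^sub>v n"
      using column_dependence_from_maximal_minor[OF B I J card det _ c(2)] maximal c by blast
    moreover have "supported_on F d"
      using supported_on_mono[OF _ d(2)] c JF by blast
    moreover have "d \<noteq> 0\<^sub>v m" using d(3) \<open>c < m\<close> by auto
    ultimately show ?thesis unfolding F_def by blast
  qed
qed

lemma vec_nonzero_index: "v \<noteq> 0\<^sub>v (dim_vec v) \<Longrightarrow> \<exists>i<dim_vec v. v $ i \<noteq> 0"
  by (metis eq_vecI index_zero_vec(1,2))

lemma finite_ex_min_max:
  fixes r :: "'b \<Rightarrow> 'a::linorder"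
  assumes "finite S" "k \<in> S"
  shows "(\<exists>j0\<in>S. \<forall>j\<in>S. r j0 \<le> r j) \<and> (\<exists>j1\<in>S. \<forall>j\<in>S. r j \<le> r j1)"
proof -
  have fin: "finite (r ` S)" using assms(1) by simp
  have "Min (r ` S) \<in> r ` S" "Max (r ` S) \<in> r ` S"
    using assms by (intro Min_in Max_in; auto)+
  then obtain j0 j1 where j: "j0 \<in> S" "r j0 = Min (r ` S)" "j1 \<in> S" "r j1 = Max (r ` S)"
    by (metis imageE)
  have "r j0 \<le> r j" "r j \<le> r j1" if "j \<in> S" for j
    using j fin that by simp_all
  then show ?thesis using j(1,3) by blast
qed

text \<open>For a \<notin> \<int> and e \<noteq> 0, the least t > 0 with a + t e \<in> \<int>.\<close>

definition step_to_integer :: "'a::floor_ceiling \<Rightarrow> 'a \<Rightarrow> 'a" where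
  "step_to_integer a e = (if 0 < e then of_int \<lceil>a\<rceil> - a else of_int \<lfloor>a\<rfloor> - a) / e"

lemma step_to_integer_pos:
  assumes "a \<notin> \<int>" "e \<noteq> 0"
  shows "0 < step_to_integer a e"
proof -
  have "of_int \<lfloor>a\<rfloor> < a" "a < of_int \<lceil>a\<rceil>"
    using assms(1) of_int_floor_le[of a] le_of_int_ceiling[of a]
    by (metis Ints_of_int order_less_le)+
  then show ?thesis
    using assms(2) by (auto simp: step_to_integer_def divide_pos_pos divide_neg_neg)
qed

lemma step_to_integer_bounds:
  assumes "0 \<le> t" "t \<le> step_to_integer a e"
  shows "of_int \<lfloor>a\<rfloor> \<le> a + t * e \<and> a + t * e \<le> of_int \<lceil>a\<rceil>"
proof (cases e "0 :: 'a" rule: linorder_cases)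
  case less
  then have "of_int \<lfloor>a\<rfloor> - a \<le> t * e"
    using assms(2) by (simp add: step_to_integer_def le_divide_eq)
  moreover have "t * e \<le> 0" using assms(1) less by (simp add: mult_nonneg_nonpos)
  ultimately show ?thesis using le_of_int_ceiling[of a] by linarith
next
  case greater
  then have "t * e \<le> of_int \<lceil>a\<rceil> - a"
    using assms(2) by (simp add: step_to_integer_def le_divide_eq)
  moreover have "0 \<le> t * e" using assms(1) greater by simp
  ultimately show ?thesis using of_int_floor_le[of a] by linarith
qed (simp add: of_int_floor_le le_of_int_ceiling)

lemma step_to_integer_Ints:
  assumes "e \<noteq> 0"
  shows "a + step_to_integer a e * e \<in> \<int>"
proof -
  have "step_to_integer a e * e = (if 0 < e then of_int \<lceil>a\<rceil> - a else of_int \<lfloor>a\<rfloor> - a)"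
    using assms by (simp add: step_to_integer_def)
  then show ?thesis by simp
qed

lemma kernel_direction_rounding_step:
  fixes y d :: "'a::floor_ceiling vec"
  assumes y: "y \<in> carrier_vec m" and d: "d \<in> carrier_vec m" "d \<noteq> 0\<^sub>v m"
    and supp: "supported_on {j. j < m \<and> y $ j \<notin> \<int>} d"
  shows "\<exists>t. (\<forall>j<m. of_int \<lfloor>y $ j\<rfloor> \<le> (y + t \<cdot>\<^sub>v d) $ j \<and> (y + t \<cdot>\<^sub>v d) $ j \<le> of_int \<lceil>y $ j\<rceil>) \<and>
    card {j. j < m \<and> (y + t \<cdot>\<^sub>v d) $ j \<notin> \<int>} < card {j. j < m \<and> y $ j \<notin> \<int>}"
proof -
  define F where "F = {j. j < m \<and> y $ j \<notin> \<int>}"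
  define G where "G = {j. j < m \<and> d $ j \<noteq> 0}"
  have GF: "G \<subseteq> F" using supp d(1) by (auto simp: G_def F_def supported_on_def)
  obtain k where "k < m" "d $ k \<noteq> 0"
    using vec_nonzero_index[of d] d by auto
  then have "k \<in> G" "finite G" by (simp_all add: G_def)
  then obtain j1 where j1: "j1 \<in> G" "\<forall>j\<in>G. step_to_integer (y $ j1) (d $ j1) \<le> step_to_integer (y $ j) (d $ j)"
    using finite_ex_min_max[of G k "\<lambda>j. step_to_integer (y $ j) (d $ j)"] by blast
  define t where "t = step_to_integer (y $ j1) (d $ j1)"
  define y' where "y' = y + t \<cdot>\<^sub>v d"
  have y'j: "y' $ j = y $ j + t * d $ j" if "j < m" for j
    using that y d by (simp add: y'_def)
  have j1': "j1 < m" "d $ j1 \<noteq> 0" "y $ j1 \<notin> \<int>"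
    using j1(1) GF by (auto simp: G_def F_def)
  then have "0 < t" unfolding t_def by (intro step_to_integer_pos)
  have bounds: "of_int \<lfloor>y $ j\<rfloor> \<le> y' $ j \<and> y' $ j \<le> of_int \<lceil>y $ j\<rceil>" if "j < m" for j
  proof (cases "j \<in> G")
    case True
    then show ?thesis
      using step_to_integer_bounds[of t "y $ j" "d $ j"] \<open>0 < t\<close> j1(2) y'j[OF that] by (simp add: t_def)
  next
    case False
    then show ?thesis using that y'j[OF that] by (simp add: G_def of_int_floor_le le_of_int_ceiling)
  qed
  have "{j. j < m \<and> y' $ j \<notin> \<int>} \<subseteq> F - {j1}"
  proof -
    have "y' $ j1 \<in> \<int>"
      using y'j[OF j1'(1)] step_to_integer_Ints[OF j1'(2)] by (simp add: t_def)
    moreover have "j \<in> F" if "j < m" "y' $ j \<notin> \<int>" for j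
      using that GF y'j[OF that(1)] by (cases "j \<in> G") (auto simp: G_def F_def)
    ultimately show ?thesis by blast
  qed
  then have "card {j. j < m \<and> y' $ j \<notin> \<int>} < card F"
    using j1(1) GF by (intro le_less_trans[OF card_mono card_Diff1_less]) (auto simp: F_def)
  then show ?thesis using bounds unfolding y'_def F_def by blast
qed

lemma of_int_mult_mat_vec_eq_0_iff:
  fixes A :: "int mat"
  assumes "A \<in> carrier_mat n m" "z \<in> carrier_vec m"
  shows "map_mat (of_int :: int \<Rightarrow> 'a::{comm_ring_1,ring_char_0}) A *\<^sub>v map_vec of_int z = 0\<^sub>v n
    \<longleftrightarrow> A *\<^sub>v z = 0\<^sub>v n"
  using of_int_hom.mult_mat_vec_hom[OF assms] of_int_hom.vec_hom_zero_iff by metis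

lemma totally_unimodular_kernel_rounding:
  fixes A :: "int mat" and y :: "rat vec"
  assumes A: "A \<in> carrier_mat n m" and TU: "totally_unimodular A"
    and y: "y \<in> carrier_vec m" and Ay: "map_mat of_int A *\<^sub>v y = 0\<^sub>v n"
  shows "\<exists>z\<in>carrier_vec m. A *\<^sub>v z = 0\<^sub>v n \<and> (\<forall>j<m. \<lfloor>y $ j\<rfloor> \<le> z $ j \<and> z $ j \<le> \<lceil>y $ j\<rceil>)"
  using y Ay
proof (induction "card {j. j < m \<and> y $ j \<notin> \<int>}" arbitrary: y rule: less_induct)
  case less
  let ?B = "map_mat rat_of_int A"
  show ?case
  proof (cases "\<forall>j<m. y $ j \<in> \<int>")
    case True
    define z where "z = vec m (\<lambda>j. \<lfloor>y $ j\<rfloor>)"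
    have "map_vec of_int z = y"
      using True less.prems(1) by (intro eq_vecI) (auto simp: z_def elim!: Ints_cases)
    moreover have "z \<in> carrier_vec m" by (simp add: z_def)
    ultimately have "A *\<^sub>v z = 0\<^sub>v n"
      using of_int_mult_mat_vec_eq_0_iff[OF A] less.prems(2) by metis
    then show ?thesis
      by (intro bexI[of _ z]) (auto simp: z_def floor_le_ceiling)
  next
    case False
    then obtain j0 where "j0 < m" "y $ j0 \<notin> \<int>" by blast
    then obtain d where d: "d \<in> carrier_vec m" "?B *\<^sub>v d = 0\<^sub>v n" "d \<noteq> 0\<^sub>v m"
      and supp: "supported_on {j. j < m \<and> y $ j \<notin> \<int>} d"
      using totally_unimodular_fractional_kernel_direction[OF A TU less.prems] by blast
    obtain t where bounds: "\<forall>j<m. of_int \<lfloor>y $ j\<rfloor> \<le> (y + t \<cdot>\<^sub>v d) $ j \<and> (y + t \<cdot>\<^sub>v d) $ j \<le> of_int \<lceil>y $ j\<rceil>"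
      and fewer: "card {j. j < m \<and> (y + t \<cdot>\<^sub>v d) $ j \<notin> \<int>} < card {j. j < m \<and> y $ j \<notin> \<int>}"
      using kernel_direction_rounding_step[OF less.prems(1) d(1,3) supp] by blast
    have "y + t \<cdot>\<^sub>v d \<in> carrier_vec m"
      using less.prems(1) d(1) by simp
    moreover have "?B *\<^sub>v (y + t \<cdot>\<^sub>v d) = 0\<^sub>v n"
      using A less.prems d by (auto simp: mult_add_distrib_mat_vec mult_mat_vec intro!: eq_vecI)
    ultimately obtain z where z: "z \<in> carrier_vec m" "A *\<^sub>v z = 0\<^sub>v n"
      and zb: "\<forall>j<m. \<lfloor>(y + t \<cdot>\<^sub>v d) $ j\<rfloor> \<le> z $ j \<and> z $ j \<le> \<lceil>(y + t \<cdot>\<^sub>v d) $ j\<rceil>"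
      using less.hyps[OF fewer] by blast
    have "\<lfloor>y $ j\<rfloor> \<le> z $ j \<and> z $ j \<le> \<lceil>y $ j\<rceil>" if "j < m" for j
      using bounds zb that by (meson le_floor_iff ceiling_le_iff order_trans)
    then show ?thesis using z by blast
  qed
qed

definition conformal_le :: "'a::{zero,ord} vec \<Rightarrow> 'a vec \<Rightarrow> bool" where
  "conformal_le z v \<longleftrightarrow> dim_vec z = dim_vec v \<and>
    (\<forall>j<dim_vec v. 0 \<le> z $ j \<and> z $ j \<le> v $ j \<or> v $ j \<le> z $ j \<and> z $ j \<le> 0)"

lemma l1norm_conformal_split:
  assumes "conformal_le z v"
  shows "l1norm v = l1norm z + l1norm (v - z)"
proof -
  have "nat \<bar>v $ j\<bar> = nat \<bar>z $ j\<bar> + nat \<bar>v $ j - z $ j\<bar>" if "j < dim_vec v" for j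
    using assms that unfolding conformal_le_def by auto
  then show ?thesis
    using assms by (simp add: l1norm_def conformal_le_def sum.distrib[symmetric])
qed

lemma lattice_lambda_le: "u \<in> L \<Longrightarrow> u \<noteq> 0\<^sub>v (dim_vec u) \<Longrightarrow> lattice_lambda L \<le> l1norm u"
  unfolding lattice_lambda_def by (intro Least_le) blast

lemma int_kernel_minus:
  assumes "v \<in> int_kernel A" "z \<in> int_kernel A"
  shows "v - z \<in> int_kernel A"
  using assms by (auto simp: int_kernel_def mult_minus_distrib_mat_vec[of A "dim_row A" "dim_col A"])

lemma conformal_decomposition_l1norm:
  assumes "v \<in> int_kernel A" "z \<in> int_kernel A" "z \<noteq> 0\<^sub>v (dim_vec z)" "z \<noteq> v"
    and "conformal_le z v"
  shows "2 * lattice_lambda (int_kernel A) \<le> l1norm v"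
proof -
  have dim: "dim_vec z = dim_vec v" using assms(5) by (simp add: conformal_le_def)
  have "v - z \<noteq> 0\<^sub>v (dim_vec (v - z))"
  proof
    assume "v - z = 0\<^sub>v (dim_vec (v - z))"
    then have "(v - z) $ j = 0" if "j < dim_vec v" for j
      using that dim by simp
    then have "v $ j - z $ j = 0" if "j < dim_vec v" for j
      using that dim by (metis index_minus_vec(1))
    then have "z = v" using dim by (intro eq_vecI) auto
    then show False using assms(4) by simp
  qed
  then have "lattice_lambda (int_kernel A) \<le> l1norm (v - z)"
    using lattice_lambda_le int_kernel_minus[OF assms(1,2)] by blast
  moreover have "lattice_lambda (int_kernel A) \<le> l1norm z"
    using lattice_lambda_le assms(2,3) by blast
  ultimately show ?thesis
    using l1norm_conformal_split[OF assms(5)] by linarith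
qed

lemma conformal_le_smult:
  fixes u :: "'a::linordered_idom vec"
  assumes "1 \<le> g"
  shows "conformal_le u (g \<cdot>\<^sub>v u)"
  unfolding conformal_le_def
proof (intro conjI allI impI)
  fix j assume "j < dim_vec (g \<cdot>\<^sub>v u)"
  then have j: "(g \<cdot>\<^sub>v u) $ j = g * u $ j" by simp
  show "0 \<le> u $ j \<and> u $ j \<le> (g \<cdot>\<^sub>v u) $ j \<or> (g \<cdot>\<^sub>v u) $ j \<le> u $ j \<and> u $ j \<le> 0"
  proof (cases "0 \<le> u $ j")
    case True
    then show ?thesis using mult_right_mono[of 1 g "u $ j"] assms j by simp
  next
    case False
    then show ?thesis using mult_right_mono_neg[of 1 g "u $ j"] assms j by simp
  qed
qed simp

lemma int_kernel_smult_cancel: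
  assumes "g \<cdot>\<^sub>v u \<in> int_kernel A" and "g \<noteq> 0"
  shows "u \<in> int_kernel A"
proof -
  have du: "dim_vec u = dim_col A" using assms(1) by (simp add: int_kernel_def)
  have "(A *\<^sub>v u) $ i = 0" if "i < dim_row A" for i
  proof -
    have "g * (A *\<^sub>v u) $ i = (A *\<^sub>v (g \<cdot>\<^sub>v u)) $ i"
      using that du by simp
    also have "\<dots> = 0" using that assms(1) by (simp add: int_kernel_def)
    finally show ?thesis using assms(2) by simp
  qed
  then show ?thesis
    using assms(1) by (auto simp: int_kernel_def intro!: eq_vecI)
qed

lemma short_kernel_vector_primitive:
  assumes v: "v \<in> int_kernel A" "v \<noteq> 0\<^sub>v (dim_vec v)"
    and short: "l1norm v < 2 * lattice_lambda (int_kernel A)"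
  shows "Gcd {v $ i | i. i < dim_vec v} = 1"
proof (rule ccontr)
  define g where "g = Gcd {v $ i | i. i < dim_vec v}"
  assume "Gcd {v $ i | i. i < dim_vec v} \<noteq> 1"
  then have "g \<noteq> 1" by (simp add: g_def)
  have g_dvd: "g dvd v $ i" if "i < dim_vec v" for i
    unfolding g_def using that by (intro Gcd_dvd) auto
  obtain i0 where i0: "i0 < dim_vec v" "v $ i0 \<noteq> 0" using vec_nonzero_index[OF v(2)] by blast
  then have "g \<noteq> 0" using g_dvd by fastforce
  moreover have "0 \<le> g" by (simp add: g_def)
  ultimately have "2 \<le> g" using \<open>g \<noteq> 1\<close> by linarith
  define u where "u = vec (dim_vec v) (\<lambda>i. v $ i div g)"
  have vu: "v = g \<cdot>\<^sub>v u"
    using g_dvd by (intro eq_vecI) (auto simp: u_def)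
  \<comment> \<open>v = u + (g - 1) u splits v conformally into two kernel vectors.\<close>
  have "u \<in> int_kernel A"
    using int_kernel_smult_cancel[of g u A] v(1) vu \<open>g \<noteq> 0\<close> by simp
  moreover have ui0: "u $ i0 \<noteq> 0" "i0 < dim_vec u"
    using i0 vu by auto
  then have "u \<noteq> 0\<^sub>v (dim_vec u)"
    by (metis index_zero_vec(1))
  moreover have "u \<noteq> v"
  proof
    assume "u = v"
    then have "u $ i0 = g * u $ i0"
      using vu ui0(2) by (metis index_smult_vec(1))
    then have "(g - 1) * u $ i0 = 0" by (simp add: algebra_simps)
    then show False using ui0(1) \<open>2 \<le> g\<close> by simp
  qed
  moreover have "conformal_le u v"
    using conformal_le_smult[of g u] vu \<open>2 \<le> g\<close> by simp
  ultimately show False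
    using conformal_decomposition_l1norm[OF v(1)] short by fastforce
qed

lemma conformal_le_scaled:
  fixes y v :: "'a::linordered_field vec"
  assumes "dim_vec y = dim_vec v"
    and scaled: "\<And>j. j < dim_vec v \<Longrightarrow> \<exists>q. 0 \<le> q \<and> q \<le> 1 \<and> y $ j = q * v $ j"
  shows "conformal_le y v"
  unfolding conformal_le_def
proof (intro conjI allI impI)
  fix j assume "j < dim_vec v"
  then obtain q where q: "0 \<le> q" "q \<le> 1" and y: "y $ j = q * v $ j"
    using scaled by blast
  show "0 \<le> y $ j \<and> y $ j \<le> v $ j \<or> v $ j \<le> y $ j \<and> y $ j \<le> 0"
  proof (cases "0 \<le> v $ j")
    case True
    then show ?thesis using q mult_left_le_one_le[of "v $ j" q] y by (simp add: mult.commute)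
  next
    case False
    then have "(1 - q) * v $ j \<le> 0" "q * v $ j \<le> 0"
      using q by (simp_all add: mult_nonneg_nonpos)
    then show ?thesis using y by (simp add: algebra_simps)
  qed
qed (rule assms(1))

lemma conformal_combination:
  fixes v w :: "'a::linordered_field vec"
  assumes dim: "dim_vec w = dim_vec v"
    and supp: "\<And>j. j < dim_vec v \<Longrightarrow> v $ j = 0 \<Longrightarrow> w $ j = 0"
    and k: "k < dim_vec v" "v $ k \<noteq> 0" "w $ k = 0"
    and l: "l < dim_vec v" "w $ l \<noteq> 0"
  shows "\<exists>\<alpha> \<beta>. conformal_le (\<alpha> \<cdot>\<^sub>v v + \<beta> \<cdot>\<^sub>v w) v \<and>
    (\<exists>j0<dim_vec v. v $ j0 \<noteq> 0 \<and> (\<alpha> \<cdot>\<^sub>v v + \<beta> \<cdot>\<^sub>v w) $ j0 = 0) \<and>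
    (\<exists>j1<dim_vec v. v $ j1 \<noteq> 0 \<and> (\<alpha> \<cdot>\<^sub>v v + \<beta> \<cdot>\<^sub>v w) $ j1 = v $ j1)"
proof -
  define S where "S = {j. j < dim_vec v \<and> v $ j \<noteq> 0}"
  define r where "r j = w $ j / v $ j" for j
  have "v $ l \<noteq> 0" using supp[OF l(1)] l(2) by blast
  then have "k \<in> S" "l \<in> S" using k l by (auto simp: S_def)
  moreover have "finite S" by (simp add: S_def)
  ultimately obtain j0 j1 where j01: "j0 \<in> S" "j1 \<in> S"
    and r_bounds: "\<And>j. j \<in> S \<Longrightarrow> r j0 \<le> r j" "\<And>j. j \<in> S \<Longrightarrow> r j \<le> r j1"
    using finite_ex_min_max[of S k r] by blast
  have "r k = 0" "r l \<noteq> 0" using k l \<open>v $ l \<noteq> 0\<close> by (auto simp: r_def)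
  then have lt: "r j0 < r j1"
    using r_bounds[OF \<open>k \<in> S\<close>] r_bounds[OF \<open>l \<in> S\<close>] by linarith
  \<comment> \<open>The affine map sending the smallest ratio w/v on the support of v to 0 and the largest to 1.\<close>
  define \<beta> where "\<beta> = 1 / (r j1 - r j0)"
  define \<alpha> where "\<alpha> = - r j0 * \<beta>"
  define y where "y = \<alpha> \<cdot>\<^sub>v v + \<beta> \<cdot>\<^sub>v w"
  define q where "q j = (r j - r j0) * \<beta>" for j
  have yS: "y $ j = q j * v $ j" if "j \<in> S" for j
  proof -
    have "w $ j = r j * v $ j" using that by (simp add: S_def r_def)
    then show ?thesis using that dim by (simp add: S_def y_def q_def \<alpha>_def algebra_simps)
  qed
  have "conformal_le y v"
  proof (rule conformal_le_scaled)
    fix j assume j: "j < dim_vec v"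
    show "\<exists>q. 0 \<le> q \<and> q \<le> 1 \<and> y $ j = q * v $ j"
    proof (cases "j \<in> S")
      case True
      have "0 \<le> q j" "q j \<le> 1"
        using r_bounds[OF True] lt by (simp_all add: q_def \<beta>_def divide_le_eq_1)
      then show ?thesis using yS[OF True] by blast
    next
      case False
      then have "y $ j = 0 * v $ j" using j dim supp by (simp add: S_def y_def)
      then show ?thesis by (intro exI[of _ 0]) simp
    qed
  qed (simp add: y_def dim)
  moreover have "y $ j0 = 0" "y $ j1 = v $ j1"
    using yS j01 lt by (simp_all add: q_def \<beta>_def)
  ultimately show ?thesis
    using j01 unfolding y_def S_def by blast
qed

lemma conformal_le_rounding:
  fixes y :: "'a::floor_ceiling vec"
  assumes "conformal_le y (map_vec of_int v)" "z \<in> carrier_vec (dim_vec v)"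
    and "\<forall>j<dim_vec v. \<lfloor>y $ j\<rfloor> \<le> z $ j \<and> z $ j \<le> \<lceil>y $ j\<rceil>"
  shows "conformal_le z v"
  unfolding conformal_le_def
proof (intro conjI allI impI)
  fix j assume j: "j < dim_vec v"
  then have "0 \<le> y $ j \<and> y $ j \<le> of_int (v $ j) \<or> of_int (v $ j) \<le> y $ j \<and> y $ j \<le> 0"
    using assms(1) by (simp add: conformal_le_def)
  then have "0 \<le> \<lfloor>y $ j\<rfloor> \<and> \<lceil>y $ j\<rceil> \<le> v $ j \<or> v $ j \<le> \<lfloor>y $ j\<rfloor> \<and> \<lceil>y $ j\<rceil> \<le> 0"
    by (auto simp: le_floor_iff ceiling_le_iff)
  moreover have "\<lfloor>y $ j\<rfloor> \<le> z $ j" "z $ j \<le> \<lceil>y $ j\<rceil>"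
    using assms(3) j by auto
  ultimately show "0 \<le> z $ j \<and> z $ j \<le> v $ j \<or> v $ j \<le> z $ j \<and> z $ j \<le> 0"
    by (elim disjE conjE) linarith+
qed (use assms(2) in simp)

lemma short_kernel_vector_support_minimal:
  assumes A: "A \<in> carrier_mat n m" and TU: "totally_unimodular A"
    and v: "v \<in> int_kernel A" and short: "l1norm v < 2 * lattice_lambda (int_kernel A)"
  shows "\<not> (\<exists>w\<in>int_kernel A. w \<noteq> 0\<^sub>v (dim_vec w) \<and> supp w \<subset> supp v)"
proof
  assume "\<exists>w\<in>int_kernel A. w \<noteq> 0\<^sub>v (dim_vec w) \<and> supp w \<subset> supp v"
  then obtain w where w: "w \<in> int_kernel A" "w \<noteq> 0\<^sub>v (dim_vec w)" and sub: "supp w \<subset> supp v"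
    by blast
  let ?B = "map_mat rat_of_int A"
  let ?v = "map_vec rat_of_int v" and ?w = "map_vec rat_of_int w"
  have vw: "v \<in> carrier_vec m" "A *\<^sub>v v = 0\<^sub>v n" "w \<in> carrier_vec m" "A *\<^sub>v w = 0\<^sub>v n"
    using v w(1) A by (auto simp: int_kernel_def)
  have kernel: "?B *\<^sub>v ?v = 0\<^sub>v n" "?B *\<^sub>v ?w = 0\<^sub>v n"
    using of_int_mult_mat_vec_eq_0_iff[OF A] vw by blast+
  obtain k where "k < m" "v $ k \<noteq> 0" "w $ k = 0"
    using sub vw by (auto simp: supp_def)
  moreover obtain l where "l < m" "w $ l \<noteq> 0"
    using vec_nonzero_index[OF w(2)] vw by auto
  moreover have "v $ j = 0 \<Longrightarrow> w $ j = 0" if "j < m" for j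
    using sub that vw by (auto simp: supp_def)
  ultimately obtain \<alpha> \<beta> j0 j1 where y: "conformal_le (\<alpha> \<cdot>\<^sub>v ?v + \<beta> \<cdot>\<^sub>v ?w) ?v"
    and j0: "j0 < m" "v $ j0 \<noteq> 0" "(\<alpha> \<cdot>\<^sub>v ?v + \<beta> \<cdot>\<^sub>v ?w) $ j0 = 0"
    and j1: "j1 < m" "v $ j1 \<noteq> 0" "(\<alpha> \<cdot>\<^sub>v ?v + \<beta> \<cdot>\<^sub>v ?w) $ j1 = of_int (v $ j1)"
    using conformal_combination[of ?w ?v k l] vw by auto
  have "\<alpha> \<cdot>\<^sub>v ?v + \<beta> \<cdot>\<^sub>v ?w \<in> carrier_vec m"
    using vw by simp
  moreover have "?B *\<^sub>v (\<alpha> \<cdot>\<^sub>v ?v + \<beta> \<cdot>\<^sub>v ?w) = 0\<^sub>v n"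
    using A vw kernel by (auto simp: mult_add_distrib_mat_vec mult_mat_vec intro!: eq_vecI)
  ultimately obtain z where z: "z \<in> carrier_vec m" "A *\<^sub>v z = 0\<^sub>v n"
    and round: "\<forall>j<m. \<lfloor>(\<alpha> \<cdot>\<^sub>v ?v + \<beta> \<cdot>\<^sub>v ?w) $ j\<rfloor> \<le> z $ j \<and> z $ j \<le> \<lceil>(\<alpha> \<cdot>\<^sub>v ?v + \<beta> \<cdot>\<^sub>v ?w) $ j\<rceil>"
    using totally_unimodular_kernel_rounding[OF A TU] by blast
  have "z \<in> int_kernel A" using z A by (simp add: int_kernel_def)
  moreover have "z $ j0 = 0" "z $ j1 = v $ j1"
    using round j0 j1 by (metis ceiling_zero floor_zero ceiling_of_int floor_of_int order_antisym)+
  then have "z \<noteq> 0\<^sub>v (dim_vec z)" "z \<noteq> v"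
    using j0 j1 z by auto
  moreover have "conformal_le z v"
    using conformal_le_rounding[OF y] z round vw by simp
  ultimately show False
    using conformal_decomposition_l1norm[OF v] short by fastforce
qed

theorem mainTheorem5:
  fixes A :: "int mat" and n m :: nat and v :: "int vec"
  assumes "A \<in> carrier_mat n m"
    and "totally_unimodular A"
    and "v \<in> int_kernel A"
    and "v \<noteq> 0\<^sub>v m"
    and "l1norm v < 2 * lattice_lambda (int_kernel A)"
  shows "is_circuit A v"
proof -
  have "dim_vec v = m" using assms(1,3) by (simp add: int_kernel_def)
  then have "v \<noteq> 0\<^sub>v (dim_vec v)" using assms(4) by simp
  then show ?thesis
    unfolding is_circuit_def
    using assms short_kernel_vector_primitive short_kernel_vector_support_minimal by blast
qed

end
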